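(* Let $d\geq 3$ and $n_1\geq\cdots\geq n_d\geq 2$ be integers. Let $N$ and $M$ be the numbers of vertices and edges of $\textsc{Grid}(n_1,\ldots,n_{d-1})$, let $\tilde f$ be a $Q_{d-1}$-magic vertex labeling of $\textsc{Grid}(n_1,\ldots,n_{d-1})$ with magic sum $S$, and let $\tilde g$ be a $Q_{d-1}$-magic edge labeling of $\textsc{Grid}(n_1,\ldots,n_{d-1})$ with magic sum $S'$. Define $g$ on the edges of $\textsc{Grid}(n_1,\ldots,n_d)$ as follows, writing every edge as $e=\{\mathbf x,\mathbf y\}$ with $\mathbf y=\mathbf x+\mathbf e_i$ for a unique $i\in[d]$ ($\mathbf e_i$ the $i$-th unit vector), and writing $\mathbf x'=(x_1,\ldots,x_{d-1})$, $\mathbf y'=(y_1,\ldots,y_{d-1})$: (i) if $i=d$: $g(e)=\tilde f(\mathbf x')+n_dM+(x_d-1)N$ if $x_1+\cdots+x_{d-1}$ is odd, and $g(e)=\tilde f(\mathbf x')+n_dM+(n_d-1-x_d)N$ if $x_1+\cdots+x_{d-1}$ is even; (ii) if $d$ is odd and $i\leq d-1$, or $d$ is even and $i\leq d-2$: $g(e)=\tilde g(\{\mathbf x',\mathbf y'\})+(x_d-1)M$ if $i$ is odd, and $g(e)=\tilde g(\{\mathbf x',\mathbf y'\})+(n_d-x_d)M$ if $i$ is even; (iii) if $d$ is even and $i=d-1$: $g(e)=\tilde g(\{\mathbf x',\mathbf y'\})+(x_d-1)M$ if $x_1+\cdots+x_{d-2}$ is odd, and $g(e)=\tilde g(\{\mathbf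 x',\mathbf y'\})+(n_d-x_d)M$ if $x_1+\cdots+x_{d-2}$ is even. Then $g$ is a $Q_d$-magic edge labeling of $\textsc{Grid}(n_1,\ldots,n_d)$ with $Q_d$-magic sum $$S+2S'+2^{d-2}(n_d-2)N+2^{d-2}\bigl(2n_d+(d-1)(n_d-1)\bigr)M.$$
   Context: $[k]=\{1,\ldots,k\}$. The grid graph $\textsc{Grid}(n_1,\ldots,n_m)$ has vertex set $[n_1]\times\cdots\times[n_m]$ and edge set $\{\{\mathbf x,\mathbf y\}:\sum_{i=1}^m|x_i-y_i|=1\}$. The $m$-cube $Q_m$ is $\textsc{Grid}(2,\ldots,2)$ ($m$ entries). For graphs $G=(V,E)$ and $H$: a bijection $f:V\to\{1,\ldots,|V|\}$ is an $H$-magic vertex labeling if there is a constant $c$ with $\sum_{v\in V(H')}f(v)=c$ for every subgraph $H'\subseteq G$ isomorphic to $H$; a bijection $g:E\to\{1,\ldots,|E|\}$ is an $H$-magic edge labeling if there is a constant $c'$ with $\sum_{e\in E(H')}g(e)=c'$ for every subgraph $H'\subseteq G$ isomorphic to $H$. The constants $c$, $c'$ are the $H$-magic sums. *)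

theory Defs
  imports Main
begin

definition grid_V :: "nat list \<Rightarrow> nat list set" where
  "grid_V ns = {x. length x = length ns \<and> (\<forall>i<length ns. 1 \<le> x ! i \<and> x ! i \<le> ns ! i)}"

definition grid_E :: "nat list \<Rightarrow> nat list set set" where
  "grid_E ns = {{x, y} | x y. x \<in> grid_V ns \<and> y \<in> grid_V ns \<and>
      (\<Sum>i<length ns. nat \<bar>int (x ! i) - int (y ! i)\<bar>) = 1}"

definition cube :: "nat \<Rightarrow> nat list" where
  "cube m = replicate m 2"

text \<open>phi maps H=(VH,EH) onto a subgraph of G=(VG,EG); the subgraphs of G isomorphic to H are
  exactly the graphs (phi ` VH, (\<lambda>e. phi ` e) ` EH) for such phi.\<close>
definition subgraph_embedding ::
  "'a set \<Rightarrow> 'a set set \<Rightarrow> 'b set \<Rightarrow> 'b set set \<Rightarrow> ('a \<Rightarrow> 'b) \<Rightarrow> bool" where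
  "subgraph_embedding VH EH VG EG phi \<longleftrightarrow>
     inj_on phi VH \<and> phi ` VH \<subseteq> VG \<and> (\<forall>e\<in>EH. phi ` e \<in> EG)"

definition magic_vertex_labeling ::
  "'b set \<Rightarrow> 'b set set \<Rightarrow> 'a set \<Rightarrow> 'a set set \<Rightarrow> ('b \<Rightarrow> nat) \<Rightarrow> nat \<Rightarrow> bool" where
  "magic_vertex_labeling VG EG VH EH f c \<longleftrightarrow>
     bij_betw f VG {1..card VG} \<and>
     (\<forall>phi. subgraph_embedding VH EH VG EG phi \<longrightarrow> (\<Sum>v\<in>phi ` VH. f v) = c)"

definition magic_edge_labeling ::
  "'b set \<Rightarrow> 'b set set \<Rightarrow> 'a set \<Rightarrow> 'a set set \<Rightarrow> ('b set \<Rightarrow> nat) \<Rightarrow> nat \<Rightarrow> bool" where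
  "magic_edge_labeling VG EG VH EH g c \<longleftrightarrow>
     bij_betw g EG {1..card EG} \<and>
     (\<forall>phi. subgraph_embedding VH EH VG EG phi \<longrightarrow>
        (\<Sum>e\<in>(\<lambda>e. phi ` e) ` EH. g e) = c)"

text \<open>x + e_i for 1-indexed i.\<close>
definition add_unit :: "nat list \<Rightarrow> nat \<Rightarrow> nat list" where
  "add_unit x i = x[i - 1 := x ! (i - 1) + 1]"

end

theory Submission
  imports Defs
begin

(*
  A copy of Q_d in Grid(n_1, ..., n_d) is always a unit subcube: the two paths around a square face
  of the cube are mapped to paths of unit steps, so opposite edges of a face step along the same axis
  in the same direction, and each direction of the cube moves a single coordinate of the grid.
  A unit subcube between layers t and t + 1 of the last coordinate consists of a copy of Q_{d-1} in
  each layer, together contributing 2 S' plus layer offsets, and of 2^{d-1} vertical edges,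
  contributing S plus layer offsets. Flipping the first coordinate changes the parity of
  x_1 + ... + x_{d-1}, so offsets chosen by that parity pair up with a constant sum; offsets chosen
  by the parity of the direction alternate. Bijectivity holds because, on the horizontal and on the
  vertical edges, a label is a two-digit number in base M (resp. N) whose digits are a label of
  g~ (resp. f~) and a layer index.
*)

lemma finite_grid_V: "finite (grid_V ns)"
proof (rule finite_subset)
  show "grid_V ns \<subseteq> {xs. set xs \<subseteq> {..sum_list ns} \<and> length xs = length ns}"
    using elem_le_sum_list[of _ ns] by (fastforce simp: grid_V_def in_set_conv_nth)
qed (simp add: finite_lists_length_eq)

text \<open>Every edge of a grid is \<open>{x, x + e_(k+1)}\<close> for a unique lower end \<open>x\<close> and 0-based
  direction \<open>k\<close>.\<close>
definition edge_at :: "nat list \<times> nat \<Rightarrow> nat list set" where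
  "edge_at = (\<lambda>(x, k). {x, x[k := x ! k + 1]})"

definition edge_index :: "nat list \<Rightarrow> (nat list \<times> nat) set" where
  "edge_index ns = {(x, k). x \<in> grid_V ns \<and> k < length ns \<and> x ! k < ns ! k}"

lemma step_in_grid_V: "(x, k) \<in> edge_index ns \<Longrightarrow> x[k := x ! k + 1] \<in> grid_V ns"
  by (auto simp: edge_index_def grid_V_def nth_list_update)

lemma grid_E_eq_edge_at: "grid_E ns = edge_at ` edge_index ns"
proof
  show "grid_E ns \<subseteq> edge_at ` edge_index ns"
  proof
    fix e assume "e \<in> grid_E ns"
    then obtain x y where e: "e = {x, y}" and x: "x \<in> grid_V ns" and y: "y \<in> grid_V ns"
      and s: "(\<Sum>i<length ns. nat \<bar>int (x ! i) - int (y ! i)\<bar>) = 1"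
      unfolding grid_E_def by blast
    obtain k where k: "k < length ns" "nat \<bar>int (x ! k) - int (y ! k)\<bar> = 1"
      and others: "\<forall>i\<in>{..<length ns}. k \<noteq> i \<longrightarrow> nat \<bar>int (x ! i) - int (y ! i)\<bar> = 0"
      using s unfolding sum_eq_1_iff[OF finite_lessThan] by blast
    have same: "x ! i = y ! i" if "i < length ns" "i \<noteq> k" for i
      using others that by auto
    have len: "length x = length ns" "length y = length ns" using x y by (auto simp: grid_V_def)
    consider "y ! k = x ! k + 1" | "x ! k = y ! k + 1" using k(2) by linarith
    then show "e \<in> edge_at ` edge_index ns"
    proof cases
      case 1
      have "y = x[k := x ! k + 1]"
        by (rule nth_equalityI) (use len same 1 k in \<open>auto simp: nth_list_update\<close>)
      moreover have "(x, k) \<in> edge_index ns" using x y k 1 len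
        by (auto simp: edge_index_def grid_V_def)
      ultimately show ?thesis using e by (auto simp: edge_at_def image_iff intro!: bexI[of _ "(x, k)"])
    next
      case 2
      have "x = y[k := y ! k + 1]"
        by (rule nth_equalityI) (use len same 2 k in \<open>auto simp: nth_list_update\<close>)
      moreover have "(y, k) \<in> edge_index ns" using x y k 2 len
        by (auto simp: edge_index_def grid_V_def)
      ultimately show ?thesis using e by (auto simp: edge_at_def image_iff intro!: bexI[of _ "(y, k)"])
    qed
  qed
next
  show "edge_at ` edge_index ns \<subseteq> grid_E ns"
  proof
    fix e assume "e \<in> edge_at ` edge_index ns"
    then obtain x k where xk: "(x, k) \<in> edge_index ns" and e: "e = {x, x[k := x ! k + 1]}"
      by (auto simp: edge_at_def)
    have x: "x \<in> grid_V ns" and k: "k < length ns" using xk by (auto simp: edge_index_def)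
    have "(\<Sum>i<length ns. nat \<bar>int (x ! i) - int (x[k := x ! k + 1] ! i)\<bar>)
        = (\<Sum>i<length ns. if i = k then 1 else 0)"
      by (rule sum.cong) (use x in \<open>auto simp: grid_V_def nth_list_update\<close>)
    also have "\<dots> = 1" using k by simp
    finally show "e \<in> grid_E ns" unfolding grid_E_def using e x step_in_grid_V[OF xk] by blast
  qed
qed

lemma inj_on_edge_at: "inj_on edge_at (edge_index ns)"
proof (rule inj_onI)
  fix a b assume a: "a \<in> edge_index ns" and b: "b \<in> edge_index ns" and eq: "edge_at a = edge_at b"
  obtain x k y l where ab: "a = (x, k)" "b = (y, l)" by (cases a, cases b)
  have k: "k < length x" and l: "l < length y" and len: "length x = length y"
    using a b ab by (auto simp: edge_index_def grid_V_def)
  have e: "{x, x[k := x ! k + 1]} = {y, y[l := y ! l + 1]}" using eq ab by (simp add: edge_at_def)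
  have "x[k := x ! k + 1] ! k \<noteq> x ! k" using k by simp
  then have moved: "x[k := x ! k + 1] \<noteq> x" by metis
  show "a = b"
  proof (cases "x = y")
    case True
    with e moved have "x[k := x ! k + 1] = x[l := x ! l + 1]" unfolding doubleton_eq_iff by auto
    then have "x[k := x ! k + 1] ! k = x[l := x ! l + 1] ! k" by simp
    then have "k = l" using k by (cases "k = l") auto
    then show ?thesis using True ab by simp
  next
    case False
    with e have xy: "x = y[l := y ! l + 1]" "x[k := x ! k + 1] = y"
      unfolding doubleton_eq_iff by blast+
    have "x ! k = y[l := y ! l + 1] ! k" using xy(1) by (rule arg_cong)
    moreover have "x[k := x ! k + 1] ! k = y ! k" using xy(2) by (rule arg_cong)
    ultimately show ?thesis using k l len by (cases "k = l") simp_all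
  qed
qed

lemma bij_betw_edge_at: "bij_betw edge_at (edge_index ns) (grid_E ns)"
  by (rule bij_betw_imageI[OF inj_on_edge_at grid_E_eq_edge_at[symmetric]])

lemma finite_edge_index: "finite (edge_index ns)"
proof (rule finite_subset)
  show "edge_index ns \<subseteq> grid_V ns \<times> {..<length ns}" by (auto simp: edge_index_def)
qed (simp add: finite_grid_V)

lemma finite_grid_E: "finite (grid_E ns)"
  unfolding grid_E_eq_edge_at using finite_edge_index by simp

lemma edge_subset_grid_V: "e \<in> grid_E ns \<Longrightarrow> e \<subseteq> grid_V ns"
  by (auto simp: grid_E_def)

lemma grid_V_snoc: "x @ [t] \<in> grid_V (ns @ [n]) \<longleftrightarrow> x \<in> grid_V ns \<and> 1 \<le> t \<and> t \<le> n"
proof (cases "length x = length ns")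
  case True
  then have "(\<forall>i<Suc (length ns). 1 \<le> (x @ [t]) ! i \<and> (x @ [t]) ! i \<le> (ns @ [n]) ! i)
      \<longleftrightarrow> (\<forall>i<length ns. 1 \<le> x ! i \<and> x ! i \<le> ns ! i) \<and> 1 \<le> t \<and> t \<le> n"
    unfolding All_less_Suc by (auto simp: nth_append)
  then show ?thesis using True by (simp add: grid_V_def)
qed (simp add: grid_V_def)

lemma length_cube [simp]: "length (cube m) = m"
  by (simp add: cube_def)

lemma cube_V_iff: "b \<in> grid_V (cube m) \<longleftrightarrow> length b = m \<and> (\<forall>i<m. b ! i = 1 \<or> b ! i = 2)"
  by (auto simp: grid_V_def cube_def)

lemma card_cube_V: "card (grid_V (cube m)) = 2 ^ m"
proof -
  have "grid_V (cube m) = {xs. set xs \<subseteq> {1, 2} \<and> length xs = m}"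
    by (auto simp: cube_V_iff in_set_conv_nth) (metis insertE nth_mem singletonD subsetD)
  then show ?thesis by (simp add: card_lists_length_eq numeral_2_eq_2)
qed

lemma cube_V_update: "b \<in> grid_V (cube m) \<Longrightarrow> c = 1 \<or> c = 2 \<Longrightarrow> b[j := c] \<in> grid_V (cube m)"
  by (cases "j < length b") (auto simp: cube_V_iff nth_list_update)

lemma edge_index_cube: "edge_index (cube m) = {(b, k). b \<in> grid_V (cube m) \<and> k < m \<and> b ! k = 1}"
  by (auto simp: edge_index_def cube_V_iff) (auto simp: cube_def)

definition subcube_corners :: "nat list \<Rightarrow> nat list set" where
  "subcube_corners ns = {p \<in> grid_V ns. \<forall>k<length ns. p ! k < ns ! k}"

definition subcube :: "nat list \<Rightarrow> nat list \<Rightarrow> nat list" where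
  "subcube p b = map (\<lambda>i. p ! i + b ! i - 1) [0..<length p]"

lemma length_subcube [simp]: "length (subcube p b) = length p"
  by (simp add: subcube_def)

lemma nth_subcube: "i < length p \<Longrightarrow> subcube p b ! i = p ! i + b ! i - 1"
  by (simp add: subcube_def)

lemma subcube_snoc: "length b = length p \<Longrightarrow> subcube (p @ [a]) (b @ [c]) = subcube p b @ [a + c - 1]"
  by (rule nth_equalityI) (auto simp: nth_subcube nth_append)

lemma subcube_corners_snoc:
  "p @ [q] \<in> subcube_corners (ns @ [n]) \<longleftrightarrow> p \<in> subcube_corners ns \<and> 1 \<le> q \<and> q < n"
proof (cases "length p = length ns")
  case True
  then show ?thesis by (auto simp: subcube_corners_def grid_V_snoc nth_append All_less_Suc)
qed (auto simp: subcube_corners_def grid_V_def)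

lemma subcube_in_grid_V:
  assumes p: "p \<in> subcube_corners ns" and b: "b \<in> grid_V (cube (length ns))"
  shows "subcube p b \<in> grid_V ns"
proof -
  have lp: "length p = length ns" using p by (simp add: subcube_corners_def grid_V_def)
  have "1 \<le> subcube p b ! i \<and> subcube p b ! i \<le> ns ! i" if i: "i < length ns" for i
  proof -
    have "1 \<le> p ! i" "p ! i < ns ! i" using p i by (auto simp: subcube_corners_def grid_V_def)
    moreover have "b ! i = 1 \<or> b ! i = 2" using b i by (simp add: cube_V_iff)
    ultimately show ?thesis using i lp by (auto simp: nth_subcube)
  qed
  then show ?thesis using lp by (simp add: grid_V_def)
qed

lemma inj_on_subcube: "inj_on (subcube p) (grid_V (cube (length p)))"
proof (rule inj_onI)
  fix a b assume a: "a \<in> grid_V (cube (length p))" and b: "b \<in> grid_V (cube (length p))"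
    and eq: "subcube p a = subcube p b"
  show "a = b"
  proof (rule nth_equalityI)
    show "length a = length b" using a b by (simp add: cube_V_iff)
    fix i assume "i < length a"
    then have i: "i < length p" using a by (simp add: cube_V_iff)
    have "subcube p a ! i = subcube p b ! i" using eq by simp
    moreover have "a ! i \<ge> 1" "b ! i \<ge> 1" using a b i by (auto simp: cube_V_iff)
    ultimately show "a ! i = b ! i" using i by (simp add: nth_subcube)
  qed
qed

lemma subcube_step_iff:
  assumes a: "a \<in> grid_V (cube (length p))" and b: "b \<in> grid_V (cube (length p))"
    and k: "k < length p"
  shows "subcube p b = (subcube p a)[k := subcube p a ! k + 1] \<longleftrightarrow> a ! k = 1 \<and> b = a[k := 2]"
proof -
  have len: "length a = length p" "length b = length p" using a b by (auto simp: cube_V_iff)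
  have "subcube p b = (subcube p a)[k := subcube p a ! k + 1] \<longleftrightarrow>
      (\<forall>i<length p. b ! i = (if i = k then a ! i + 1 else a ! i))"
  proof -
    have "subcube p b ! i = (subcube p a)[k := subcube p a ! k + 1] ! i \<longleftrightarrow>
        b ! i = (if i = k then a ! i + 1 else a ! i)" if i: "i < length p" for i
    proof -
      have "1 \<le> a ! i" "1 \<le> b ! i" using a b i by (auto simp: cube_V_iff)
      then show ?thesis using i k by (auto simp: nth_subcube nth_list_update)
    qed
    then show ?thesis by (simp add: list_eq_iff_nth_eq)
  qed
  also have "\<dots> \<longleftrightarrow> a ! k = 1 \<and> b = a[k := 2]"
  proof
    assume step: "\<forall>i<length p. b ! i = (if i = k then a ! i + 1 else a ! i)"
    then have "a ! k = 1" using a b k by (force simp: cube_V_iff)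
    moreover have "b = a[k := 2]"
      using step len \<open>a ! k = 1\<close> by (auto simp: list_eq_iff_nth_eq nth_list_update)
    ultimately show "a ! k = 1 \<and> b = a[k := 2]" ..
  qed (use len in \<open>auto simp: nth_list_update\<close>)
  finally show ?thesis .
qed

lemma subcube_edge_at:
  assumes p: "p \<in> subcube_corners ns" and bk: "(b, k) \<in> edge_index (cube (length ns))"
  shows "subcube p ` edge_at (b, k) = edge_at (subcube p b, k)" "(subcube p b, k) \<in> edge_index ns"
proof -
  have lp: "length p = length ns" using p by (simp add: subcube_corners_def grid_V_def)
  have b: "b \<in> grid_V (cube (length p))" "k < length p" "b ! k = 1"
    using bk lp by (auto simp: edge_index_cube)
  have "subcube p (b[k := b ! k + 1]) = (subcube p b)[k := subcube p b ! k + 1]"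
    using subcube_step_iff[OF b(1) cube_V_update[OF b(1)] b(2)] b(3) by (simp add: numeral_2_eq_2)
  then show "subcube p ` edge_at (b, k) = edge_at (subcube p b, k)" by (simp add: edge_at_def)
  show "(subcube p b, k) \<in> edge_index ns"
    using subcube_in_grid_V[OF p] b lp p by (auto simp: edge_index_def subcube_corners_def nth_subcube)
qed

lemma subgraph_embedding_subcube:
  assumes p: "p \<in> subcube_corners ns"
  shows "subgraph_embedding (grid_V (cube (length ns))) (grid_E (cube (length ns)))
    (grid_V ns) (grid_E ns) (subcube p)"
  unfolding subgraph_embedding_def
proof (intro conjI ballI)
  have lp: "length p = length ns" using p by (simp add: subcube_corners_def grid_V_def)
  show "inj_on (subcube p) (grid_V (cube (length ns)))" using inj_on_subcube[of p] lp by simp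
  show "subcube p ` grid_V (cube (length ns)) \<subseteq> grid_V ns" using subcube_in_grid_V[OF p]
    by blast
  fix e assume "e \<in> grid_E (cube (length ns))"
  then obtain b k where "(b, k) \<in> edge_index (cube (length ns))" "e = edge_at (b, k)"
    by (auto simp: grid_E_eq_edge_at)
  then show "subcube p ` e \<in> grid_E ns" using subcube_edge_at[OF p] by (auto simp: grid_E_eq_edge_at)
qed

lemma sum_subcube_edges:
  assumes p: "p \<in> subcube_corners ns"
  shows "(\<Sum>e\<in>(\<lambda>e. subcube p ` e) ` grid_E (cube (length ns)). F e)
       = (\<Sum>(b, k)\<in>edge_index (cube (length ns)). F (edge_at (subcube p b, k)))"
proof -
  let ?q = "\<lambda>(b, k). (subcube p b, k)"
  have lp: "length p = length ns" using p by (simp add: subcube_corners_def grid_V_def)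
  have img: "(\<lambda>e. subcube p ` e) ` grid_E (cube (length ns))
      = (edge_at \<circ> ?q) ` edge_index (cube (length ns))"
    unfolding grid_E_eq_edge_at image_comp using subcube_edge_at(1)[OF p] by (auto intro!: image_cong)
  have "inj_on ?q (edge_index (cube (length ns)))"
    using inj_on_subcube[of p] lp by (auto simp: inj_on_def edge_index_def)
  moreover have "?q ` edge_index (cube (length ns)) \<subseteq> edge_index ns"
    using subcube_edge_at(2)[OF p] by auto
  ultimately have "inj_on (edge_at \<circ> ?q) (edge_index (cube (length ns)))"
    using comp_inj_on inj_on_subset[OF inj_on_edge_at] by blast
  then show ?thesis unfolding img by (subst sum.reindex) (auto simp: case_prod_beta intro!: sum.cong)
qed

lemma in_subcube_image:
  assumes p: "p \<in> subcube_corners ns" and x: "length x = length ns"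
    and near: "\<forall>i<length ns. x ! i = p ! i \<or> x ! i = p ! i + 1"
  shows "x \<in> subcube p ` grid_V (cube (length ns))"
proof
  let ?c = "map (\<lambda>i. x ! i + 1 - p ! i) [0..<length ns]"
  have lp: "length p = length ns" and p1: "\<forall>i<length ns. 1 \<le> p ! i"
    using p by (auto simp: subcube_corners_def grid_V_def)
  show "?c \<in> grid_V (cube (length ns))" using near by (auto simp: cube_V_iff)
  show "x = subcube p ?c"
    by (rule nth_equalityI) (use x lp p1 near in \<open>auto simp: nth_subcube\<close>)
qed

lemma subcube_reflects_edges:
  assumes p: "p \<in> subcube_corners ns"
    and c: "c \<in> grid_V (cube (length ns))" "c' \<in> grid_V (cube (length ns))"
    and e: "{subcube p c, subcube p c'} \<in> grid_E ns"
  shows "{c, c'} \<in> grid_E (cube (length ns))"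
proof -
  have lp: "length p = length ns" using p by (simp add: subcube_corners_def grid_V_def)
  have step: "{a, b} \<in> grid_E (cube (length ns))"
    if ab: "a \<in> grid_V (cube (length ns))" "b \<in> grid_V (cube (length ns))" "k < length ns"
      and sb: "subcube p b = (subcube p a)[k := subcube p a ! k + 1]" for a b k
  proof -
    have "a ! k = 1" "b = a[k := 2]" using subcube_step_iff[of a p b k] ab sb lp by simp_all
    then have "(a, k) \<in> edge_index (cube (length ns))" "{a, b} = edge_at (a, k)"
      using ab by (simp_all add: edge_index_cube edge_at_def numeral_2_eq_2)
    then show ?thesis by (simp add: grid_E_eq_edge_at)
  qed
  obtain x k where xk: "(x, k) \<in> edge_index ns"
    and ex: "{subcube p c, subcube p c'} = {x, x[k := x ! k + 1]}"
    using e by (auto simp: grid_E_eq_edge_at edge_at_def)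
  have k: "k < length ns" using xk by (simp add: edge_index_def)
  from ex consider "subcube p c = x" "subcube p c' = x[k := x ! k + 1]"
    | "subcube p c' = x" "subcube p c = x[k := x ! k + 1]"
    by (auto simp: doubleton_eq_iff)
  then show ?thesis
  proof cases
    case 1
    then show ?thesis using step[OF c k] by simp
  next
    case 2
    then show ?thesis using step[OF c(2,1) k] by (simp add: insert_commute)
  qed
qed

definition unit_moves :: "nat \<Rightarrow> (nat \<times> int) set" where
  "unit_moves n = {..<n} \<times> {1, -1}"

lemma unit_moves_iff: "\<mu> \<in> unit_moves n \<longleftrightarrow> fst \<mu> < n \<and> (snd \<mu> = 1 \<or> snd \<mu> = -1)"
  by (cases \<mu>) (auto simp: unit_moves_def)

definition shift :: "int list \<Rightarrow> nat \<times> int \<Rightarrow> int list" where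
  "shift x = (\<lambda>(k, s). x[k := x ! k + s])"

lemma length_shift [simp]: "length (shift x \<mu>) = length x"
  by (simp add: shift_def split: prod.split)

lemma nth_shift: "i < length x \<Longrightarrow> k < length x \<Longrightarrow> shift x (k, s) ! i = x ! i + (if i = k then s else 0)"
  by (auto simp: shift_def nth_list_update)

lemma grid_E_shift:
  assumes "{x, y} \<in> grid_E ns"
  shows "\<exists>\<mu>\<in>unit_moves (length ns). map int y = shift (map int x) \<mu>"
proof -
  obtain z k where zk: "(z, k) \<in> edge_index ns" "{x, y} = {z, z[k := z ! k + 1]}"
    using assms by (auto simp: grid_E_eq_edge_at edge_at_def)
  have k: "k < length ns" "length z = length ns" using zk by (auto simp: edge_index_def grid_V_def)
  from zk(2) consider "x = z" "y = z[k := z ! k + 1]" | "y = z" "x = z[k := z ! k + 1]"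
    by (auto simp: doubleton_eq_iff)
  then show ?thesis
  proof cases
    case 1
    then have "map int y = shift (map int x) (k, 1)" using k
      by (simp add: shift_def map_update add.commute)
    then show ?thesis using k by (auto simp: unit_moves_def)
  next
    case 2
    then have "map int y = shift (map int x) (k, -1)"
      using k by (auto simp: shift_def list_eq_iff_nth_eq nth_list_update)
    then show ?thesis using k by (auto simp: unit_moves_def)
  qed
qed

text \<open>Two two-step paths of unit moves with the same ends and different middle vertices, not
  returning to the start, go around a unit square.\<close>
lemma shift_square:
  assumes moves: "\<mu>1 \<in> unit_moves (length x)" "\<mu>2 \<in> unit_moves (length x)"
      "\<mu>3 \<in> unit_moves (length x)" "\<mu>4 \<in> unit_moves (length x)"
    and eq: "shift (shift x \<mu>1) \<mu>2 = shift (shift x \<mu>3) \<mu>4"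
    and middle: "shift x \<mu>1 \<noteq> shift x \<mu>3"
    and no_return: "shift (shift x \<mu>1) \<mu>2 \<noteq> x"
  shows "\<mu>4 = \<mu>1 \<and> \<mu>3 = \<mu>2 \<and> fst \<mu>1 \<noteq> fst \<mu>2"
proof -
  obtain k1 s1 k2 s2 k3 s3 k4 s4 where ks: "\<mu>1 = (k1, s1)" "\<mu>2 = (k2, s2)" "\<mu>3 = (k3, s3)" "\<mu>4 = (k4, s4)"
    by (cases \<mu>1, cases \<mu>2, cases \<mu>3, cases \<mu>4)
  have k: "k1 < length x" "k2 < length x" "k3 < length x" "k4 < length x"
    and s: "s1 = 1 \<or> s1 = -1" "s2 = 1 \<or> s2 = -1" "s3 = 1 \<or> s3 = -1" "s4 = 1 \<or> s4 = -1"
    using moves ks by (auto simp: unit_moves_def)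
  have coord: "(if i = k1 then s1 else 0) + (if i = k2 then s2 else 0)
      = (if i = k3 then s3 else 0) + (if i = k4 then s4 else 0)" if i: "i < length x" for i
  proof -
    have "shift (shift x (k1, s1)) (k2, s2) ! i = shift (shift x (k3, s3)) (k4, s4) ! i"
      using eq ks by simp
    then show ?thesis using i k by (simp add: nth_shift)
  qed
  have "\<not> (k1 = k3 \<and> s1 = s3)" using middle ks by auto
  moreover have "\<not> (k1 = k2 \<and> s1 + s2 = 0)"
  proof
    assume "k1 = k2 \<and> s1 + s2 = 0"
    then have "shift (shift x \<mu>1) \<mu>2 = x"
      using k ks by (auto simp: list_eq_iff_nth_eq nth_shift)
    then show False using no_return by simp
  qed
  ultimately show ?thesis
    using coord[OF k(1)] coord[OF k(2)] coord[OF k(3)] coord[OF k(4)] s ks by (auto split: if_splits)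
qed

definition cube_vertex :: "nat \<Rightarrow> nat set \<Rightarrow> nat list" where
  "cube_vertex m T = map (\<lambda>i. if i \<in> T then 2 else 1) [0..<m]"

lemma cube_vertex_in_cube_V: "cube_vertex m T \<in> grid_V (cube m)"
  by (auto simp: cube_vertex_def cube_V_iff)

lemma nth_cube_vertex: "i < m \<Longrightarrow> cube_vertex m T ! i = (if i \<in> T then 2 else 1)"
  by (simp add: cube_vertex_def)

lemma cube_vertex_insert: "l < m \<Longrightarrow> cube_vertex m (insert l T) = (cube_vertex m T)[l := 2]"
  by (rule nth_equalityI) (auto simp: cube_vertex_def nth_list_update)

lemma cube_vertex_of: "b \<in> grid_V (cube m) \<Longrightarrow> b = cube_vertex m {i. i < m \<and> b ! i = 2}"
  by (rule nth_equalityI) (auto simp: cube_vertex_def cube_V_iff)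

locale cube_embedding =
  fixes ns :: "nat list" and \<phi> :: "nat list \<Rightarrow> nat list"
  assumes embedding: "subgraph_embedding (grid_V (cube (length ns))) (grid_E (cube (length ns)))
    (grid_V ns) (grid_E ns) \<phi>"
begin

lemma \<phi>_in_grid_V: "b \<in> grid_V (cube (length ns)) \<Longrightarrow> \<phi> b \<in> grid_V ns"
  using embedding by (auto simp: subgraph_embedding_def)

lemma length_\<phi>: "b \<in> grid_V (cube (length ns)) \<Longrightarrow> length (\<phi> b) = length ns"
  using \<phi>_in_grid_V by (simp add: grid_V_def)

lemma int_\<phi>_eq_iff:
  "a \<in> grid_V (cube (length ns)) \<Longrightarrow> b \<in> grid_V (cube (length ns)) \<Longrightarrow>
    map int (\<phi> a) = map int (\<phi> b) \<longleftrightarrow> a = b"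
  using embedding by (auto simp: subgraph_embedding_def inj_on_eq_iff inj_map_eq_map)

definition move :: "nat list \<Rightarrow> nat \<Rightarrow> nat \<times> int" where
  "move b j = (SOME \<mu>. \<mu> \<in> unit_moves (length ns) \<and> map int (\<phi> (b[j := 2])) = shift (map int (\<phi> b)) \<mu>)"

lemma move_step:
  assumes b: "b \<in> grid_V (cube (length ns))" "j < length ns" "b ! j = 1"
  shows "move b j \<in> unit_moves (length ns)" "map int (\<phi> (b[j := 2])) = shift (map int (\<phi> b)) (move b j)"
proof -
  have "(b, j) \<in> edge_index (cube (length ns))" using b by (simp add: edge_index_cube)
  then have "edge_at (b, j) \<in> grid_E (cube (length ns))" by (simp add: grid_E_eq_edge_at)
  then have "{\<phi> b, \<phi> (b[j := 2])} \<in> grid_E ns"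
    using embedding b by (auto simp: subgraph_embedding_def edge_at_def numeral_2_eq_2)
  then have "\<exists>\<mu>\<in>unit_moves (length ns). map int (\<phi> (b[j := 2])) = shift (map int (\<phi> b)) \<mu>"
    by (rule grid_E_shift)
  then have "\<exists>\<mu>. \<mu> \<in> unit_moves (length ns) \<and> map int (\<phi> (b[j := 2])) = shift (map int (\<phi> b)) \<mu>"
    by blast
  then have "move b j \<in> unit_moves (length ns) \<and> map int (\<phi> (b[j := 2])) = shift (map int (\<phi> b)) (move b j)"
    unfolding move_def by (rule someI_ex)
  then show "move b j \<in> unit_moves (length ns)" "map int (\<phi> (b[j := 2])) = shift (map int (\<phi> b)) (move b j)"
    by simp_all
qed

text \<open>The two paths around a square face of the cube are mapped to two paths of unit moves as in
  \<open>shift_square\<close>.\<close>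
lemma move_square:
  assumes b: "b \<in> grid_V (cube (length ns))" and jl: "j < length ns" "l < length ns" "j \<noteq> l"
    "b ! j = 1" "b ! l = 1"
  shows "move (b[l := 2]) j = move b j \<and> fst (move b j) \<noteq> fst (move b l)"
proof -
  let ?m = "length ns" and ?x = "map int (\<phi> b)"
  have b': "b[j := 2] \<in> grid_V (cube ?m)" "b[l := 2] \<in> grid_V (cube ?m)"
    "b[j := 2, l := 2] \<in> grid_V (cube ?m)" using b by (simp_all add: cube_V_update)
  have len: "length b = ?m" using b by (simp add: cube_V_iff)
  have "b[j := 2] ! l = 1" "b[l := 2] ! j = 1" using jl by simp_all
  note m1 = move_step[OF b jl(1,4)] and m2 = move_step[OF b'(1) jl(2) this(1)]
    and m3 = move_step[OF b jl(2,5)] and m4 = move_step[OF b'(2) jl(1) this(2)]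
  have "shift (shift ?x (move b j)) (move (b[j := 2]) l) = map int (\<phi> (b[j := 2, l := 2]))"
    using m1(2) m2(2) by simp
  also have "b[j := 2, l := 2] = b[l := 2, j := 2]" using jl(3) by (rule list_update_swap)
  also have "map int (\<phi> (b[l := 2, j := 2])) = shift (shift ?x (move b l)) (move (b[l := 2]) j)"
    using m3(2) m4(2) by simp
  finally have square: "shift (shift ?x (move b j)) (move (b[j := 2]) l)
      = shift (shift ?x (move b l)) (move (b[l := 2]) j)" .
  have "b[j := 2] ! j \<noteq> b[l := 2] ! j" using jl len by simp
  then have "map int (\<phi> (b[j := 2])) \<noteq> map int (\<phi> (b[l := 2]))"
    using int_\<phi>_eq_iff[OF b'(1,2)] by auto
  then have middle: "shift ?x (move b j) \<noteq> shift ?x (move b l)" using m1(2) m3(2) by simp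
  have "b[j := 2, l := 2] ! j \<noteq> b ! j" using jl len by simp
  then have "map int (\<phi> (b[j := 2, l := 2])) \<noteq> ?x" using int_\<phi>_eq_iff[OF b'(3) b]
    by auto
  then have no_return: "shift (shift ?x (move b j)) (move (b[j := 2]) l) \<noteq> ?x"
    using m1(2) m2(2) by simp
  have "length ?x = ?m" using length_\<phi>[OF b] by simp
  then show ?thesis
    using shift_square[OF _ _ _ _ square middle no_return] m1(1) m2(1) m3(1) m4(1) by simp
qed

abbreviation bottom :: "nat list" where
  "bottom \<equiv> cube_vertex (length ns) {}"

lemma move_bottom: "j < length ns \<Longrightarrow> move bottom j \<in> unit_moves (length ns)"
  using move_step(1)[OF cube_vertex_in_cube_V[of "length ns" "{}"]] by (simp add: nth_cube_vertex)

lemma move_cube_vertex: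
  assumes "T \<subseteq> {..<length ns}" "j < length ns" "j \<notin> T"
  shows "move (cube_vertex (length ns) T) j = move bottom j"
  using finite_subset[OF assms(1) finite_lessThan] assms
proof (induction T rule: finite_induct)
  case (insert l T)
  then have l: "l < length ns" "j \<noteq> l" by auto
  have "move (cube_vertex (length ns) (insert l T)) j = move ((cube_vertex (length ns) T)[l := 2]) j"
    using l(1) by (simp add: cube_vertex_insert)
  also have "\<dots> = move (cube_vertex (length ns) T) j"
    using move_square[OF cube_vertex_in_cube_V[of "length ns" T], of j l] insert l
    by (simp add: nth_cube_vertex)
  finally show ?case using insert by simp
qed simp

lemma inj_on_axis: "inj_on (\<lambda>j. fst (move bottom j)) {..<length ns}"
proof (rule inj_onI, rule ccontr)
  fix j l assume "j \<in> {..<length ns}" "l \<in> {..<length ns}"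
    and "fst (move bottom j) = fst (move bottom l)" "j \<noteq> l"
  then show False using move_square[OF cube_vertex_in_cube_V[of "length ns" "{}"], of j l]
    by (simp add: nth_cube_vertex)
qed

lemma axis_surj: "(\<lambda>j. fst (move bottom j)) ` {..<length ns} = {..<length ns}"
proof (rule endo_inj_surj[OF finite_lessThan _ inj_on_axis])
  show "(\<lambda>j. fst (move bottom j)) ` {..<length ns} \<subseteq> {..<length ns}"
    using move_bottom by (auto simp: unit_moves_iff)
qed

text \<open>Cube direction \<open>j\<close> is the only one acting on grid coordinate \<open>fst (move bottom j)\<close>.\<close>
lemma coordinate_cube_vertex:
  assumes T: "T \<subseteq> {..<length ns}" and j: "j < length ns"
  shows "int (\<phi> (cube_vertex (length ns) T) ! fst (move bottom j))
    = int (\<phi> bottom ! fst (move bottom j)) + (if j \<in> T then snd (move bottom j) else 0)"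
  using finite_subset[OF T finite_lessThan] T
proof (induction T rule: finite_induct)
  case (insert l T)
  let ?i = "fst (move bottom j)" and ?v = "cube_vertex (length ns) T"
  have l: "l < length ns" "l \<notin> T" "T \<subseteq> {..<length ns}" using insert by auto
  have i: "?i < length ns" using move_bottom[OF j] by (simp add: unit_moves_iff)
  obtain k s where ks: "move bottom l = (k, s)" by fastforce
  have k: "k < length ns" using move_bottom[OF l(1)] ks by (simp add: unit_moves_iff)
  have "map int (\<phi> (cube_vertex (length ns) (insert l T))) = shift (map int (\<phi> ?v)) (k, s)"
    using move_step(2)[OF cube_vertex_in_cube_V[of "length ns" T] l(1)] move_cube_vertex[OF l(3,1,2)] ks l
    by (simp add: cube_vertex_insert nth_cube_vertex)
  then have "map int (\<phi> (cube_vertex (length ns) (insert l T))) ! ?i = shift (map int (\<phi> ?v)) (k, s) ! ?i"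
    by (rule arg_cong)
  then have "int (\<phi> (cube_vertex (length ns) (insert l T)) ! ?i)
      = int (\<phi> ?v ! ?i) + (if ?i = k then s else 0)"
    using i k length_\<phi>[OF cube_vertex_in_cube_V[of "length ns" T]]
      length_\<phi>[OF cube_vertex_in_cube_V[of "length ns" "insert l T"]]
    by (simp add: nth_shift)
  moreover have "?i = k \<longleftrightarrow> j = l" using inj_on_axis j l(1) ks
    by (auto simp: inj_on_def)
  ultimately show ?case using insert.IH l(2,3) ks by auto
qed simp

lemma coordinate_in_unit_interval:
  assumes i: "i < length ns"
  shows "\<exists>a\<in>{1..<ns ! i}. \<forall>b\<in>grid_V (cube (length ns)). \<phi> b ! i = a \<or> \<phi> b ! i = a + 1"
proof -
  let ?m = "length ns" and ?v = "cube_vertex (length ns)"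
  have "i \<in> (\<lambda>j. fst (move bottom j)) ` {..<?m}" using axis_surj i by simp
  then obtain j where j: "j < ?m" "fst (move bottom j) = i" by auto
  have sign: "snd (move bottom j) = 1 \<or> snd (move bottom j) = -1"
    using move_bottom[OF j(1)] by (simp add: unit_moves_iff)
  have coord: "int (\<phi> (?v T) ! i) = int (\<phi> bottom ! i) + (if j \<in> T then snd (move bottom j) else 0)"
    if "T \<subseteq> {..<?m}" for T
    using coordinate_cube_vertex[OF that j(1)] j(2) by simp
  define a c where "a = \<phi> bottom ! i" and "c = \<phi> (?v {j}) ! i"
  have "\<phi> bottom \<in> grid_V ns" "\<phi> (?v {j}) \<in> grid_V ns"
    by (simp_all add: cube_vertex_in_cube_V \<phi>_in_grid_V)
  then have bounds: "1 \<le> a" "a \<le> ns ! i" "1 \<le> c" "c \<le> ns ! i"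
    using i by (auto simp: grid_V_def a_def c_def)
  have "int c = int a + snd (move bottom j)" using coord[of "{j}"] j by (simp add: a_def c_def)
  then have ac: "c = a + 1 \<or> a = c + 1" using sign by auto
  have "\<forall>b\<in>grid_V (cube ?m). \<phi> b ! i = a \<or> \<phi> b ! i = c"
  proof
    fix b assume b: "b \<in> grid_V (cube ?m)"
    define T where "T = {i. i < ?m \<and> b ! i = 2}"
    have "T \<subseteq> {..<?m}" "b = ?v T" using cube_vertex_of[OF b] by (auto simp: T_def)
    then show "\<phi> b ! i = a \<or> \<phi> b ! i = c" using coord[of T] coord[of "{j}"] j
      by (cases "j \<in> T") (simp_all add: a_def c_def)
  qed
  then show ?thesis using bounds ac by (intro bexI[of _ "min a c"]) auto
qed

lemma image_in_unit_box:
  "\<exists>p\<in>subcube_corners ns.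
    \<forall>b\<in>grid_V (cube (length ns)). \<forall>i<length ns. \<phi> b ! i = p ! i \<or> \<phi> b ! i = p ! i + 1"
proof -
  obtain a where a: "\<And>i. i < length ns \<Longrightarrow>
      a i \<in> {1..<ns ! i} \<and> (\<forall>b\<in>grid_V (cube (length ns)). \<phi> b ! i = a i \<or> \<phi> b ! i = a i + 1)"
    using coordinate_in_unit_interval by metis
  define p where "p = map a [0..<length ns]"
  have "p \<in> subcube_corners ns" using a by (fastforce simp: subcube_corners_def grid_V_def p_def)
  moreover have "\<forall>b\<in>grid_V (cube (length ns)). \<forall>i<length ns. \<phi> b ! i = p ! i \<or> \<phi> b ! i = p ! i + 1"
    using a by (simp add: p_def)
  ultimately show ?thesis by blast
qed

lemma edge_image_eq_subcube:
  "\<exists>p\<in>subcube_corners ns.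
    (\<lambda>e. \<phi> ` e) ` grid_E (cube (length ns)) = (\<lambda>e. subcube p ` e) ` grid_E (cube (length ns))"
proof -
  let ?m = "length ns"
  obtain p where p: "p \<in> subcube_corners ns"
    and near: "\<forall>b\<in>grid_V (cube ?m). \<forall>i<?m. \<phi> b ! i = p ! i \<or> \<phi> b ! i = p ! i + 1"
    using image_in_unit_box by blast
  have lp: "length p = ?m" using p by (simp add: subcube_corners_def grid_V_def)
  have vertex: "\<phi> b \<in> subcube p ` grid_V (cube ?m)" if "b \<in> grid_V (cube ?m)" for b
    using in_subcube_image[OF p length_\<phi>] near that by blast
  have "(\<lambda>e. \<phi> ` e) ` grid_E (cube ?m) \<subseteq> (\<lambda>e. subcube p ` e) ` grid_E (cube ?m)"
  proof clarify
    fix e assume e: "e \<in> grid_E (cube ?m)"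
    then obtain b b' where bb': "e = {b, b'}" "b \<in> grid_V (cube ?m)" "b' \<in> grid_V (cube ?m)"
      by (auto simp: grid_E_def)
    obtain c c' where cc': "c \<in> grid_V (cube ?m)" "\<phi> b = subcube p c"
      "c' \<in> grid_V (cube ?m)" "\<phi> b' = subcube p c'"
      using vertex[OF bb'(2)] vertex[OF bb'(3)] by blast
    have "\<phi> ` e \<in> grid_E ns" using embedding e by (simp add: subgraph_embedding_def)
    then have "{c, c'} \<in> grid_E (cube ?m)" using subcube_reflects_edges[OF p cc'(1,3)] bb'(1) cc'
      by simp
    moreover have "\<phi> ` e = subcube p ` {c, c'}" using bb'(1) cc' by simp
    ultimately show "\<phi> ` e \<in> (\<lambda>e. subcube p ` e) ` grid_E (cube ?m)" by blast
  qed
  moreover have "card ((\<lambda>e. f ` e) ` grid_E (cube ?m)) = card (grid_E (cube ?m))"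
    if "inj_on f (grid_V (cube ?m))" for f :: "nat list \<Rightarrow> nat list"
  proof (rule card_image, rule inj_on_image, rule inj_on_subset[OF that])
    show "\<Union> (grid_E (cube ?m)) \<subseteq> grid_V (cube ?m)" using edge_subset_grid_V by blast
  qed
  moreover have "inj_on \<phi> (grid_V (cube ?m))" using embedding by (simp add: subgraph_embedding_def)
  ultimately have "(\<lambda>e. \<phi> ` e) ` grid_E (cube ?m) = (\<lambda>e. subcube p ` e) ` grid_E (cube ?m)"
    using card_subset_eq[OF finite_imageI[OF finite_grid_E]] inj_on_subcube[of p] lp by metis
  then show ?thesis using p by blast
qed

end

lemma edge_index_snoc:
  "edge_index (ns @ [n]) = (\<lambda>((x, k), t). (x @ [t], k)) ` (edge_index ns \<times> {1..n})
     \<union> (\<lambda>(x, t). (x @ [t], length ns)) ` (grid_V ns \<times> {1..<n})"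
proof (intro equalityI subsetI)
  fix yk assume yk: "yk \<in> edge_index (ns @ [n])"
  obtain y k where yk_def: "yk = (y, k)" by fastforce
  have y: "y \<in> grid_V (ns @ [n])" "k \<le> length ns" "y ! k < (ns @ [n]) ! k"
    using yk yk_def by (auto simp: edge_index_def)
  then have "y \<noteq> []" by (auto simp: grid_V_def)
  then obtain x t where xt: "y = x @ [t]" by (metis rev_exhaust)
  have x: "x \<in> grid_V ns" "1 \<le> t" "t \<le> n" and lx: "length x = length ns"
    using y(1) xt grid_V_snoc by (auto simp: grid_V_def)
  show "yk \<in> (\<lambda>((x, k), t). (x @ [t], k)) ` (edge_index ns \<times> {1..n})
     \<union> (\<lambda>(x, t). (x @ [t], length ns)) ` (grid_V ns \<times> {1..<n})"
  proof (cases "k = length ns")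
    case True
    then have "(x, t) \<in> grid_V ns \<times> {1..<n}" using x y(3) xt lx by (simp add: nth_append)
    then show ?thesis using yk_def xt True by force
  next
    case False
    then have "((x, k), t) \<in> edge_index ns \<times> {1..n}"
      using x y xt lx by (simp add: edge_index_def nth_append)
    then show ?thesis using yk_def xt by force
  qed
next
  fix yk assume "yk \<in> (\<lambda>((x, k), t). (x @ [t], k)) ` (edge_index ns \<times> {1..n})
     \<union> (\<lambda>(x, t). (x @ [t], length ns)) ` (grid_V ns \<times> {1..<n})"
  then show "yk \<in> edge_index (ns @ [n])"
    by (auto simp: edge_index_def grid_V_snoc nth_append grid_V_def[of ns])
qed

lemma inj_on_snoc_horizontal: "inj_on (\<lambda>((x, k), t). (x @ [t], k)) (edge_index ns \<times> A)"
  by (auto simp: inj_on_def edge_index_def grid_V_def)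

lemma inj_on_snoc_vertical: "inj_on (\<lambda>(x, t). (x @ [t], length ns)) (grid_V ns \<times> A)"
  by (auto simp: inj_on_def grid_V_def)

lemma sum_edge_index_snoc:
  "(\<Sum>(y, k)\<in>edge_index (ns @ [n]). F y k)
     = (\<Sum>(x, k)\<in>edge_index ns. \<Sum>t=1..n. F (x @ [t]) k) + (\<Sum>x\<in>grid_V ns. \<Sum>t=1..<n. F (x @ [t]) (length ns))"
proof -
  let ?H = "(\<lambda>((x, k), t). (x @ [t], k)) ` (edge_index ns \<times> {1..n})"
    and ?V = "(\<lambda>(x, t). (x @ [t], length ns)) ` (grid_V ns \<times> {1..<n})"
  have "?H \<inter> ?V = {}" by (auto simp: edge_index_def)
  then have "(\<Sum>(y, k)\<in>edge_index (ns @ [n]). F y k) = (\<Sum>(y, k)\<in>?H. F y k) + (\<Sum>(y, k)\<in>?V. F y k)"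
    unfolding edge_index_snoc
    by (intro sum.union_disjoint) (simp_all add: finite_edge_index finite_grid_V)
  also have "(\<Sum>(y, k)\<in>?H. F y k) = (\<Sum>(x, k)\<in>edge_index ns. \<Sum>t=1..n. F (x @ [t]) k)"
    by (subst sum.reindex[OF inj_on_snoc_horizontal]) (simp add: sum.cartesian_product case_prod_beta)
  also have "(\<Sum>(y, k)\<in>?V. F y k) = (\<Sum>x\<in>grid_V ns. \<Sum>t=1..<n. F (x @ [t]) (length ns))"
    by (subst sum.reindex[OF inj_on_snoc_vertical]) (simp add: sum.cartesian_product case_prod_beta)
  finally show ?thesis .
qed

lemma cube_Suc: "cube (Suc m) = cube m @ [2]"
  by (simp add: cube_def replicate_append_same)

lemma sum_edge_index_cube:
  "(\<Sum>(b, k)\<in>edge_index (cube m). F b k) = (\<Sum>k<m. \<Sum>b\<in>{b\<in>grid_V (cube m). b ! k = 1}. F b k)"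
proof -
  have "edge_index (cube m) = (\<lambda>(k, b). (b, k)) ` (SIGMA k:{..<m}. {b\<in>grid_V (cube m). b ! k = 1})"
    by (auto simp: edge_index_cube image_iff)
  moreover have "inj_on (\<lambda>(k, b). (b, k)) (SIGMA k:{..<m}. {b\<in>grid_V (cube m). b ! k = 1})"
    by (auto simp: inj_on_def)
  ultimately show ?thesis
    by (simp only: sum.reindex) (simp add: sum.Sigma finite_grid_V case_prod_beta)
qed

text \<open>\<open>b[j := 3 - b ! j]\<close> is the neighbour of the cube vertex \<open>b\<close> across coordinate \<open>j\<close>.\<close>
lemma cube_V_flip: "b \<in> grid_V (cube m) \<Longrightarrow> j < m \<Longrightarrow> b[j := 3 - b ! j] \<in> grid_V (cube m)"
  by (rule cube_V_update) (auto simp: cube_V_iff)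

lemma sum_cube_flip:
  fixes h :: "nat list \<Rightarrow> nat"
  assumes B: "B \<subseteq> grid_V (cube m)" and j: "j < m"
    and closed: "\<forall>b\<in>B. b[j := 3 - b ! j] \<in> B"
    and pair: "\<forall>b\<in>B. b ! j = 1 \<longrightarrow> h b + h (b[j := 2]) = C"
  shows "(\<Sum>b\<in>B. h b) = card {b\<in>B. b ! j = 1} * C"
proof -
  let ?B1 = "{b\<in>B. b ! j = 1}" and ?B2 = "{b\<in>B. b ! j = 2}"
  have fin: "finite B" using B finite_grid_V finite_subset by blast
  have len: "length b = m" "b ! j = 1 \<or> b ! j = 2" if "b \<in> B" for b
  proof -
    have "b \<in> grid_V (cube m)" using B that by blast
    then show "length b = m" "b ! j = 1 \<or> b ! j = 2" using j by (auto simp: cube_V_iff)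
  qed
  have "?B1 \<union> ?B2 = B" using len(2) by auto
  moreover have "?B1 \<inter> ?B2 = {}" by auto
  ultimately have "(\<Sum>b\<in>B. h b) = (\<Sum>b\<in>?B1. h b) + (\<Sum>b\<in>?B2. h b)"
    using fin sum.union_disjoint[of ?B1 ?B2 h] by simp
  also have "?B2 = (\<lambda>b. b[j := 2]) ` ?B1"
  proof (intro equalityI subsetI)
    fix c assume c: "c \<in> ?B2"
    then have "c[j := 1] \<in> ?B1" using closed len j by fastforce
    moreover have "c = c[j := 1, j := 2]" using c
      by (metis (mono_tags) list_update_id list_update_overwrite mem_Collect_eq)
    ultimately show "c \<in> (\<lambda>b. b[j := 2]) ` ?B1" by blast
  qed (use closed len j in auto)
  also have "inj_on (\<lambda>b. b[j := 2]) ?B1"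
    by (rule inj_onI) (metis (mono_tags, lifting) list_update_id list_update_overwrite mem_Collect_eq)
  then have "(\<Sum>b\<in>(\<lambda>b. b[j := 2]) ` ?B1. h b) = (\<Sum>b\<in>?B1. h (b[j := 2]))"
    by (simp add: sum.reindex)
  also have "(\<Sum>b\<in>?B1. h b) + (\<Sum>b\<in>?B1. h (b[j := 2])) = card ?B1 * C"
    using pair by (simp add: sum.distrib[symmetric])
  finally show ?thesis .
qed

lemma card_cube_V_coordinate_eq_1:
  assumes "j < m" shows "card {b\<in>grid_V (cube m). b ! j = 1} = 2 ^ (m - 1)"
proof -
  have "\<forall>b\<in>grid_V (cube m). b[j := 3 - b ! j] \<in> grid_V (cube m)" using cube_V_flip assms
    by blast
  then have "card (grid_V (cube m)) = card {b\<in>grid_V (cube m). b ! j = 1} * 2"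
    using sum_cube_flip[OF subset_refl assms, of "\<lambda>_. 1" 2] by simp
  moreover have "(2::nat) ^ m = 2 ^ (m - 1) * 2" using assms by (cases m) simp_all
  ultimately show ?thesis by (simp add: card_cube_V)
qed

lemma card_cube_V_coordinates_eq_1:
  assumes "j < m" "l < m" "j \<noteq> l"
  shows "card {b\<in>grid_V (cube m). b ! l = 1 \<and> b ! j = 1} = 2 ^ (m - 2)"
proof -
  let ?B = "{b\<in>grid_V (cube m). b ! l = 1}"
  have "\<forall>b\<in>?B. b[j := 3 - b ! j] \<in> ?B" using cube_V_flip assms by simp
  then have "card ?B = card {b\<in>?B. b ! j = 1} * 2"
    using sum_cube_flip[of ?B m j "\<lambda>_. 1" 2] assms by simp
  moreover have "{b\<in>?B. b ! j = 1} = {b\<in>grid_V (cube m). b ! l = 1 \<and> b ! j = 1}" by auto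
  moreover have "m - 1 = Suc (m - 2)" using assms by linarith
  ultimately show ?thesis using card_cube_V_coordinate_eq_1[OF assms(2)] by simp
qed

lemma sum_list_take_subcube_flip:
  assumes b: "b \<in> grid_V (cube (length p))" "b ! 0 = 1" and r: "0 < r" and p: "0 < length p"
  shows "sum_list (take r (subcube p (b[0 := 2]))) = sum_list (take r (subcube p b)) + 1"
proof -
  let ?x = "take r (subcube p b)"
  have "subcube p (b[0 := 2]) = (subcube p b)[0 := subcube p b ! 0 + 1]"
    using subcube_step_iff[OF b(1) cube_V_update[OF b(1)] p] b(2) by simp
  then have "take r (subcube p (b[0 := 2])) = ?x[0 := ?x ! 0 + 1]"
    using r p by (simp add: take_update_swap)
  moreover have "0 < length ?x" using r p by simp
  ultimately show ?thesis by (simp add: sum_list_update)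
qed

lemma sum_cube_parity:
  fixes X Y :: nat
  assumes p: "0 < length p"
  shows "(\<Sum>b\<in>grid_V (cube (length p)). if odd (sum_list (subcube p b)) then X else Y)
    = 2 ^ (length p - 1) * (X + Y)"
proof -
  let ?m = "length p"
  have "(\<Sum>b\<in>grid_V (cube ?m). if odd (sum_list (subcube p b)) then X else Y)
      = card {b\<in>grid_V (cube ?m). b ! 0 = 1} * (X + Y)"
  proof (rule sum_cube_flip[OF subset_refl p])
    show "\<forall>b\<in>grid_V (cube ?m). b[0 := 3 - b ! 0] \<in> grid_V (cube ?m)" using cube_V_flip p
      by blast
    show "\<forall>b\<in>grid_V (cube ?m). b ! 0 = 1 \<longrightarrow>
        (if odd (sum_list (subcube p b)) then X else Y)
          + (if odd (sum_list (subcube p (b[0 := 2]))) then X else Y) = X + Y"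
      using sum_list_take_subcube_flip[of _ p "?m"] p by simp
  qed
  then show ?thesis using card_cube_V_coordinate_eq_1[OF p] by simp
qed

lemma sum_alternating: "(\<Sum>k<2 * q. if even k then X else Y) = q * (X + (Y :: nat))"
  by (induction q) (simp_all add: algebra_simps)

text \<open>The direction of the layers over a horizontal edge of \<open>Grid(n_1, ..., n_m, n)\<close> with
  base edge \<open>(x, k)\<close>: cases (ii) and (iii) of the labeling for \<open>i = k + 1\<close> and \<open>d = m + 1\<close>.\<close>
definition layers_ascend :: "nat list \<Rightarrow> nat \<Rightarrow> bool" where
  "layers_ascend x k \<longleftrightarrow>
     (if odd (length x) \<and> Suc k = length x then odd (sum_list (butlast x)) else even k)"

lemma sum_cube_butlast_parity:
  fixes X Y :: nat
  assumes m: "2 \<le> length p"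
  shows "(\<Sum>b\<in>{b\<in>grid_V (cube (length p)). b ! (length p - 1) = 1}.
      if odd (sum_list (butlast (subcube p b))) then X else Y) = 2 ^ (length p - 2) * (X + Y)"
proof -
  let ?m = "length p" and ?B = "{b\<in>grid_V (cube (length p)). b ! (length p - 1) = 1}"
  have m0: "0 < ?m" "0 < ?m - 1" "p \<noteq> []" using m by auto
  have "(\<Sum>b\<in>?B. if odd (sum_list (butlast (subcube p b))) then X else Y) = card {b\<in>?B. b ! 0 = 1} * (X + Y)"
  proof (rule sum_cube_flip[of _ ?m])
    show "\<forall>b\<in>?B. b[0 := 3 - b ! 0] \<in> ?B" using cube_V_flip[of _ ?m 0] m0 by simp
    show "\<forall>b\<in>?B. b ! 0 = 1 \<longrightarrow> (if odd (sum_list (butlast (subcube p b))) then X else Y)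
        + (if odd (sum_list (butlast (subcube p (b[0 := 2])))) then X else Y) = X + Y"
      using sum_list_take_subcube_flip[of _ p "?m - 1"] m0 by (simp add: butlast_conv_take)
  qed (use m0 in auto)
  also have "{b\<in>?B. b ! 0 = 1} = {b\<in>grid_V (cube ?m). b ! (?m - 1) = 1 \<and> b ! 0 = 1}" by auto
  also have "card \<dots> = 2 ^ (?m - 2)" using card_cube_V_coordinates_eq_1[of 0 ?m "?m - 1"] m0 by simp
  finally show ?thesis .
qed

lemma sum_layers_ascend:
  fixes X Y :: nat
  assumes m: "2 \<le> length p"
  shows "(\<Sum>(b, k)\<in>edge_index (cube (length p)). if layers_ascend (subcube p b) k then X else Y)
    = 2 ^ (length p - 2) * length p * (X + Y)"
proof -
  let ?m = "length p" and ?F = "\<lambda>b k. if layers_ascend (subcube p b) k then X else Y"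
  have "?m - 1 = Suc (?m - 2)" using m by simp
  then have pow: "2 ^ (?m - 1) = 2 * 2 ^ (?m - 2)" by simp
  have regular: "(\<Sum>b\<in>{b\<in>grid_V (cube ?m). b ! k = 1}. ?F b k) = 2 ^ (?m - 1) * (if even k then X else Y)"
    if "k < ?m" "\<not> (odd ?m \<and> Suc k = ?m)" for k
  proof -
    have "layers_ascend (subcube p b) k \<longleftrightarrow> even k" for b using that(2)
      by (auto simp: layers_ascend_def)
    then show ?thesis using card_cube_V_coordinate_eq_1[OF that(1)] by simp
  qed
  have "(\<Sum>(b, k)\<in>edge_index (cube ?m). ?F b k) = (\<Sum>k<?m. \<Sum>b\<in>{b\<in>grid_V (cube ?m). b ! k = 1}. ?F b k)"
    by (rule sum_edge_index_cube)
  also have "\<dots> = 2 ^ (?m - 2) * ?m * (X + Y)"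
  proof (cases "even ?m")
    case True
    then obtain q where q: "?m = 2 * q" by blast
    have "(\<Sum>k<?m. \<Sum>b\<in>{b\<in>grid_V (cube ?m). b ! k = 1}. ?F b k)
        = (\<Sum>k<2 * q. 2 ^ (?m - 1) * (if even k then X else Y))"
      unfolding q using regular True q by (intro sum.cong) auto
    also have "\<dots> = 2 ^ (?m - 1) * (q * (X + Y))"
      by (simp add: sum_distrib_left[symmetric] sum_alternating)
    also have "\<dots> = 2 ^ (?m - 2) * ?m * (X + Y)" by (subst pow) (simp add: q algebra_simps)
    finally show ?thesis .
  next
    case False
    then obtain q where q: "?m = 2 * q + 1" using oddE by blast
    have "(\<Sum>k<?m. \<Sum>b\<in>{b\<in>grid_V (cube ?m). b ! k = 1}. ?F b k)
        = (\<Sum>k<2 * q. 2 ^ (?m - 1) * (if even k then X else Y))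
          + (\<Sum>b\<in>{b\<in>grid_V (cube ?m). b ! (?m - 1) = 1}. ?F b (?m - 1))"
      using regular q by simp
    also have "(\<Sum>b\<in>{b\<in>grid_V (cube ?m). b ! (?m - 1) = 1}. ?F b (?m - 1)) = 2 ^ (?m - 2) * (X + Y)"
      using sum_cube_butlast_parity[OF m, of X Y] m False by (simp add: layers_ascend_def)
    also have "(\<Sum>k<2 * q. 2 ^ (?m - 1) * (if even k then X else Y)) = 2 ^ (?m - 1) * (q * (X + Y))"
      by (simp add: sum_distrib_left[symmetric] sum_alternating)
    also have "2 ^ (?m - 1) * (q * (X + Y)) + 2 ^ (?m - 2) * (X + Y) = 2 ^ (?m - 2) * ?m * (X + Y)"
      by (subst pow) (simp add: q algebra_simps)
    finally show ?thesis .
  qed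
  finally show ?thesis .
qed

lemma bij_betw_layer_offset: "bij_betw (\<lambda>t. if P then t - 1 else K - t) {1..K} {..<K :: nat}"
proof (cases P)
  case True
  have "bij_betw (\<lambda>t. t - 1) {1..K} {..<K}" by (rule bij_betw_byWitness[where f' = Suc]) auto
  then show ?thesis using True by simp
next
  case False
  have "bij_betw (\<lambda>t. K - t) {1..K} {..<K}"
    by (rule bij_betw_byWitness[where f' = "\<lambda>u. K - u"]) auto
  then show ?thesis using False by simp
qed

lemma add_mult_eq_add_mult_iff:
  fixes u u' v v' N :: nat
  assumes "u < N" "u' < N"
  shows "u + v * N = u' + v' * N \<longleftrightarrow> u = u' \<and> v = v'"
proof
  assume eq: "u + v * N = u' + v' * N"
  have "u = u'" using arg_cong[OF eq, of "\<lambda>z. z mod N"] assms by simp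
  then show "u = u' \<and> v = v'" using eq assms by simp
qed simp

text \<open>\<open>f a - 1\<close> and \<open>h a b\<close> are the two digits of \<open>f a + h a b * N - 1\<close> in base \<open>N\<close>.\<close>
lemma bij_betw_mixed_radix:
  fixes f :: "'a \<Rightarrow> nat" and h :: "'a \<Rightarrow> 'b \<Rightarrow> nat"
  assumes f: "bij_betw f A {1..N}" and h: "\<And>a. a \<in> A \<Longrightarrow> bij_betw (h a) B {..<K}"
  shows "bij_betw (\<lambda>(a, b). c + f a + h a b * N) (A \<times> B) {c + 1 .. c + K * N}"
proof -
  let ?F = "\<lambda>(a, b). c + f a + h a b * N"
  have fr: "1 \<le> f a" "f a \<le> N" if "a \<in> A" for a using f that by (auto simp: bij_betw_def)
  have hr: "h a b < K" if "a \<in> A" "b \<in> B" for a b using h[OF that(1)] that(2)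
    by (auto simp: bij_betw_def)
  have inj: "inj_on ?F (A \<times> B)"
  proof (rule inj_onI)
    fix x y assume "x \<in> A \<times> B" "y \<in> A \<times> B" and eq': "?F x = ?F y"
    then obtain a b a' b' where xy: "x = (a, b)" "y = (a', b')"
      and ab: "a \<in> A" "b \<in> B" "a' \<in> A" "b' \<in> B" by blast
    have eq: "?F (a, b) = ?F (a', b')" using eq' xy by simp
    have "(f a - 1) + h a b * N = (f a' - 1) + h a' b' * N" using eq fr[OF ab(1)] fr[OF ab(3)] by simp
    moreover have "f a - 1 < N" "f a' - 1 < N" using fr[OF ab(1)] fr[OF ab(3)] by simp_all
    ultimately have "f a - 1 = f a' - 1" "h a b = h a' b'" using add_mult_eq_add_mult_iff by blast+
    then have "f a = f a'" using fr[OF ab(1)] fr[OF ab(3)] by simp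
    then have "a = a'" using bij_betw_imp_inj_on[OF f] ab(1,3) by (simp add: inj_on_eq_iff)
    moreover have "b = b'"
      using \<open>a = a'\<close> \<open>h a b = h a' b'\<close> bij_betw_imp_inj_on[OF h[OF ab(1)]] ab(2,4)
      by (simp add: inj_on_eq_iff)
    ultimately show "x = y" using xy by simp
  qed
  have "?F ` (A \<times> B) \<subseteq> {c + 1 .. c + K * N}"
  proof clarify
    fix a b assume ab: "a \<in> A" "b \<in> B"
    have "(h a b + 1) * N \<le> K * N" using hr[OF ab] by (intro mult_right_mono) simp_all
    then show "c + f a + h a b * N \<in> {c + 1 .. c + K * N}" using fr[OF ab(1)] by simp
  qed
  moreover have "card (A \<times> B) = K * N"
  proof (cases "A = {}")
    case False
    then obtain a where "a \<in> A" by blast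
    then show ?thesis using bij_betw_same_card[OF f] bij_betw_same_card[OF h]
      by (simp add: card_cartesian_product)
  qed (use bij_betw_same_card[OF f] in simp)
  ultimately have "?F ` (A \<times> B) = {c + 1 .. c + K * N}"
    using card_image[OF inj] by (intro card_subset_eq) simp_all
  then show ?thesis using inj by (simp add: bij_betw_def)
qed

text \<open>The labeling of the theorem for \<open>Grid(ns @ [n])\<close>, i.e. \<open>d = length ns + 1\<close>, with every edge
  written as \<open>edge_at (x @ [t], k)\<close>.\<close>
locale layered_labeling =
  fixes ns :: "nat list" and n N M S S' :: nat
    and ft :: "nat list \<Rightarrow> nat" and gt g :: "nat list set \<Rightarrow> nat"
  assumes length_ns: "2 \<le> length ns" and n: "2 \<le> n"
    and card_V: "N = card (grid_V ns)" and card_E: "M = card (grid_E ns)"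
    and ft: "magic_vertex_labeling (grid_V ns) (grid_E ns)
      (grid_V (cube (length ns))) (grid_E (cube (length ns))) ft S"
    and gt: "magic_edge_labeling (grid_V ns) (grid_E ns)
      (grid_V (cube (length ns))) (grid_E (cube (length ns))) gt S'"
    and g_vertical: "\<And>x t. x \<in> grid_V ns \<Longrightarrow> 1 \<le> t \<Longrightarrow> t < n \<Longrightarrow>
      g (edge_at (x @ [t], length ns)) = n * M + ft x + (if odd (sum_list x) then t - 1 else n - 1 - t) * N"
    and g_horizontal: "\<And>x k t. (x, k) \<in> edge_index ns \<Longrightarrow> 1 \<le> t \<Longrightarrow> t \<le> n \<Longrightarrow>
      g (edge_at (x @ [t], k)) = gt (edge_at (x, k)) + (if layers_ascend x k then t - 1 else n - t) * M"
begin

lemma bij_betw_g: "bij_betw g (grid_E (ns @ [n])) {1 .. n * M + (n - 1) * N}"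
proof -
  let ?hor = "\<lambda>((x, k), t). (x @ [t], k)" and ?ver = "\<lambda>(x, t). (x @ [t], length ns)"
  have "bij_betw gt (grid_E ns) {1..M}" using gt card_E by (simp add: magic_edge_labeling_def)
  then have "bij_betw (gt \<circ> edge_at) (edge_index ns) {1..M}"
    by (rule bij_betw_trans[OF bij_betw_edge_at])
  then have "bij_betw (\<lambda>(a, t). 0 + (gt \<circ> edge_at) a
        + (if layers_ascend (fst a) (snd a) then t - 1 else n - t) * M)
      (edge_index ns \<times> {1..n}) {0 + 1 .. 0 + n * M}"
    by (rule bij_betw_mixed_radix) (rule bij_betw_layer_offset)
  then have "bij_betw (\<lambda>(a, t). gt (edge_at a) + (if layers_ascend (fst a) (snd a) then t - 1 else n - t) * M)
      (edge_index ns \<times> {1..n}) {1 .. n * M}" by simp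
  then have "bij_betw (g \<circ> edge_at \<circ> ?hor) (edge_index ns \<times> {1..n}) {1 .. n * M}"
    by (rule bij_betw_cong[THEN iffD1, rotated]) (auto simp: g_horizontal)
  then have hor: "bij_betw (g \<circ> edge_at) (?hor ` (edge_index ns \<times> {1..n})) {1 .. n * M}"
    using bij_betw_comp_iff[OF bij_betw_imageI[OF inj_on_snoc_horizontal refl]] by blast
  have "bij_betw ft (grid_V ns) {1..N}" using ft card_V by (simp add: magic_vertex_labeling_def)
  then have "bij_betw (\<lambda>(x, t). n * M + ft x + (if odd (sum_list x) then t - 1 else (n - 1) - t) * N)
      (grid_V ns \<times> {1..n - 1}) {n * M + 1 .. n * M + (n - 1) * N}"
    by (rule bij_betw_mixed_radix) (rule bij_betw_layer_offset)
  moreover have "{1..n - 1} = {1..<n}" using n by auto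
  ultimately have "bij_betw (\<lambda>(x, t). n * M + ft x + (if odd (sum_list x) then t - 1 else (n - 1) - t) * N)
      (grid_V ns \<times> {1..<n}) {n * M + 1 .. n * M + (n - 1) * N}" by simp
  then have "bij_betw (g \<circ> edge_at \<circ> ?ver) (grid_V ns \<times> {1..<n}) {n * M + 1 .. n * M + (n - 1) * N}"
    by (rule bij_betw_cong[THEN iffD1, rotated]) (auto simp: g_vertical)
  then have ver: "bij_betw (g \<circ> edge_at) (?ver ` (grid_V ns \<times> {1..<n})) {n * M + 1 .. n * M + (n - 1) * N}"
    using bij_betw_comp_iff[OF bij_betw_imageI[OF inj_on_snoc_vertical refl]] by blast
  have "bij_betw (g \<circ> edge_at) (edge_index (ns @ [n])) ({1 .. n * M} \<union> {n * M + 1 .. n * M + (n - 1) * N})"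
    unfolding edge_index_snoc by (rule bij_betw_combine[OF hor ver]) auto
  moreover have "{1 .. n * M} \<union> {n * M + 1 .. n * M + (n - 1) * N} = {1 .. n * M + (n - 1) * N}"
    by auto
  ultimately show ?thesis by (simp add: bij_betw_comp_iff[OF bij_betw_edge_at])
qed

lemma sum_vertical_edges:
  assumes p: "p \<in> subcube_corners ns" and q: "1 \<le> q" "q < n"
  shows "(\<Sum>b\<in>grid_V (cube (length ns)). g (edge_at (subcube p b @ [q], length ns)))
    = 2 ^ length ns * n * M + S + 2 ^ (length ns - 1) * (n - 2) * N"
proof -
  let ?m = "length ns" and ?V = "grid_V (cube (length ns))"
  have lp: "length p = ?m" using p by (simp add: subcube_corners_def grid_V_def)
  have "(\<Sum>b\<in>?V. g (edge_at (subcube p b @ [q], ?m)))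
      = (\<Sum>b\<in>?V. n * M + ft (subcube p b) + (if odd (sum_list (subcube p b)) then q - 1 else n - 1 - q) * N)"
    using g_vertical subcube_in_grid_V[OF p] q by simp
  also have "\<dots> = 2 ^ ?m * n * M + (\<Sum>b\<in>?V. ft (subcube p b))
      + (\<Sum>b\<in>?V. if odd (sum_list (subcube p b)) then q - 1 else n - 1 - q) * N"
    by (simp add: sum.distrib sum_distrib_right card_cube_V)
  also have "(\<Sum>b\<in>?V. ft (subcube p b)) = S"
  proof -
    have "(\<Sum>v\<in>subcube p ` ?V. ft v) = S"
      using ft subgraph_embedding_subcube[OF p] by (simp add: magic_vertex_labeling_def)
    then show ?thesis using inj_on_subcube[of p] lp by (simp add: sum.reindex)
  qed
  also have "(\<Sum>b\<in>?V. if odd (sum_list (subcube p b)) then q - 1 else n - 1 - q) = 2 ^ (?m - 1) * (n - 2)"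
  proof -
    have "0 < length p" using lp length_ns by linarith
    then show ?thesis using sum_cube_parity[of p "q - 1" "n - 1 - q"] lp q by simp
  qed
  finally show ?thesis by (simp add: algebra_simps)
qed

lemma sum_horizontal_edges:
  assumes p: "p \<in> subcube_corners ns" and q: "1 \<le> q" "q < n"
  shows "(\<Sum>(b, k)\<in>edge_index (cube (length ns)).
      g (edge_at (subcube p b @ [q], k)) + g (edge_at (subcube p b @ [q + 1], k)))
    = 2 * S' + 2 ^ (length ns - 1) * length ns * (n - 1) * M"
proof -
  let ?m = "length ns" and ?E = "edge_index (cube (length ns))"
  let ?A = "(q - 1) * M + q * M" and ?B = "(n - q) * M + (n - (q + 1)) * M"
  have lp: "length p = ?m" using p by (simp add: subcube_corners_def grid_V_def)
  have "(\<Sum>(b, k)\<in>?E. g (edge_at (subcube p b @ [q], k)) + g (edge_at (subcube p b @ [q + 1], k)))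
      = (\<Sum>(b, k)\<in>?E. 2 * gt (edge_at (subcube p b, k)) + (if layers_ascend (subcube p b) k then ?A else ?B))"
  proof (rule sum.cong[OF refl], clarify)
    fix b k assume "(b, k) \<in> ?E"
    then show "g (edge_at (subcube p b @ [q], k)) + g (edge_at (subcube p b @ [q + 1], k))
      = 2 * gt (edge_at (subcube p b, k)) + (if layers_ascend (subcube p b) k then ?A else ?B)"
      using g_horizontal[OF subcube_edge_at(2)[OF p]] q by simp
  qed
  also have "\<dots> = 2 * (\<Sum>(b, k)\<in>?E. gt (edge_at (subcube p b, k)))
      + (\<Sum>(b, k)\<in>?E. if layers_ascend (subcube p b) k then ?A else ?B)"
    by (simp add: sum.distrib sum_distrib_left case_prod_beta)
  also have "(\<Sum>(b, k)\<in>?E. gt (edge_at (subcube p b, k))) = S'"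
    using gt subgraph_embedding_subcube[OF p] sum_subcube_edges[OF p, of gt]
    by (simp add: magic_edge_labeling_def)
  also have "(\<Sum>(b, k)\<in>?E. if layers_ascend (subcube p b) k then ?A else ?B) = 2 ^ (?m - 2) * ?m * (?A + ?B)"
    using sum_layers_ascend[of p ?A ?B] lp length_ns by simp
  also have "?A + ?B = ((q - 1) + q + (n - q) + (n - (q + 1))) * M" by (simp only: add_mult_distrib)
  also have "(q - 1) + q + (n - q) + (n - (q + 1)) = 2 * (n - 1)" using q by linarith
  also have "2 ^ (?m - 2) * ?m * (2 * (n - 1) * M) = 2 ^ (?m - 1) * ?m * (n - 1) * M"
  proof -
    have "?m - 1 = Suc (?m - 2)" using length_ns by simp
    then show ?thesis by simp
  qed
  finally show ?thesis .
qed

lemma sum_g_subcube: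
  assumes p: "p \<in> subcube_corners (ns @ [n])"
  shows "(\<Sum>e\<in>(\<lambda>e. subcube p ` e) ` grid_E (cube (Suc (length ns))). g e)
    = S + 2 * S' + 2 ^ (length ns - 1) * (n - 2) * N
      + 2 ^ (length ns - 1) * (2 * n + length ns * (n - 1)) * M"
proof -
  let ?m = "length ns"
  obtain p' q where pq: "p = p' @ [q]"
    using p by (cases p rule: rev_cases) (auto simp: subcube_corners_def grid_V_def)
  have p': "p' \<in> subcube_corners ns" and q: "1 \<le> q" "q < n" using p pq subcube_corners_snoc
    by auto
  have lp': "length p' = ?m" using p' by (simp add: subcube_corners_def grid_V_def)
  have layer: "subcube p (b @ [c]) = subcube p' b @ [q + c - 1]" if "b \<in> grid_V (cube ?m)" for b c
    using subcube_snoc[of b p' q c] that lp' pq by (simp add: cube_V_iff)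
  have "(\<Sum>e\<in>(\<lambda>e. subcube p ` e) ` grid_E (cube (Suc ?m)). g e)
      = (\<Sum>(b, k)\<in>edge_index (cube ?m @ [2]). g (edge_at (subcube p b, k)))"
    using sum_subcube_edges[OF p, of g] by (simp add: cube_Suc)
  also have "\<dots> = (\<Sum>(b, k)\<in>edge_index (cube ?m). \<Sum>t=1..2. g (edge_at (subcube p (b @ [t]), k)))
      + (\<Sum>b\<in>grid_V (cube ?m). \<Sum>t=1..<2. g (edge_at (subcube p (b @ [t]), ?m)))"
    by (simp add: sum_edge_index_snoc)
  also have "(\<Sum>b\<in>grid_V (cube ?m). \<Sum>t=1..<2. g (edge_at (subcube p (b @ [t]), ?m)))
      = (\<Sum>b\<in>grid_V (cube ?m). g (edge_at (subcube p' b @ [q], ?m)))"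
    by (rule sum.cong[OF refl]) (simp add: layer numeral_2_eq_2)
  also have "\<dots> = 2 ^ ?m * n * M + S + 2 ^ (?m - 1) * (n - 2) * N"
    by (rule sum_vertical_edges[OF p' q])
  also have "(\<Sum>(b, k)\<in>edge_index (cube ?m). \<Sum>t=1..2. g (edge_at (subcube p (b @ [t]), k)))
      = (\<Sum>(b, k)\<in>edge_index (cube ?m).
          g (edge_at (subcube p' b @ [q], k)) + g (edge_at (subcube p' b @ [q + 1], k)))"
    by (rule sum.cong[OF refl]) (auto simp: layer edge_index_def numeral_2_eq_2)
  also have "\<dots> = 2 * S' + 2 ^ (?m - 1) * ?m * (n - 1) * M"
    by (rule sum_horizontal_edges[OF p' q])
  also have "(2::nat) ^ ?m = 2 ^ (?m - 1) * 2" using length_ns by (cases ?m) simp_all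
  finally show ?thesis by (simp add: algebra_simps)
qed

lemma magic_edge_labeling_g:
  "magic_edge_labeling (grid_V (ns @ [n])) (grid_E (ns @ [n]))
     (grid_V (cube (Suc (length ns)))) (grid_E (cube (Suc (length ns)))) g
     (S + 2 * S' + 2 ^ (length ns - 1) * (n - 2) * N
        + 2 ^ (length ns - 1) * (2 * n + length ns * (n - 1)) * M)"
  unfolding magic_edge_labeling_def
proof (intro conjI allI impI)
  show "bij_betw g (grid_E (ns @ [n])) {1..card (grid_E (ns @ [n]))}"
    using bij_betw_g bij_betw_same_card[OF bij_betw_g] by simp
  fix \<phi> assume "subgraph_embedding (grid_V (cube (Suc (length ns)))) (grid_E (cube (Suc (length ns))))
    (grid_V (ns @ [n])) (grid_E (ns @ [n])) \<phi>"
  then interpret cube_embedding "ns @ [n]" \<phi> by unfold_locales simp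
  obtain p where "p \<in> subcube_corners (ns @ [n])"
    "(\<lambda>e. \<phi> ` e) ` grid_E (cube (Suc (length ns))) = (\<lambda>e. subcube p ` e) ` grid_E (cube (Suc (length ns)))"
    using edge_image_eq_subcube by auto
  then show "(\<Sum>e\<in>(\<lambda>e. \<phi> ` e) ` grid_E (cube (Suc (length ns))). g e) =
    S + 2 * S' + 2 ^ (length ns - 1) * (n - 2) * N + 2 ^ (length ns - 1) * (2 * n + length ns * (n - 1)) * M"
    using sum_g_subcube by simp
qed

end

lemma add_unit_snoc: "k < length x \<Longrightarrow> add_unit (x @ [t]) (Suc k) = x[k := x ! k + 1] @ [t]"
  by (simp add: add_unit_def list_update_append nth_append)

lemma add_unit_snoc_last: "add_unit (x @ [t]) (Suc (length x)) = x @ [t + 1]"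
  by (simp add: add_unit_def)

theorem lemma6:
  fixes ns :: "nat list" and d N M S S' :: nat
    and ft :: "nat list \<Rightarrow> nat" and gt :: "nat list set \<Rightarrow> nat"
    and g :: "nat list set \<Rightarrow> nat"
  assumes hd: "length ns = d" and d3: "d \<ge> 3"
    and hdec: "\<forall>i j. i \<le> j \<and> j < d \<longrightarrow> ns ! j \<le> ns ! i"
    and h2: "\<forall>i<d. ns ! i \<ge> 2"
    and hN: "N = card (grid_V (butlast ns))"
    and hM: "M = card (grid_E (butlast ns))"
    and hf: "magic_vertex_labeling (grid_V (butlast ns)) (grid_E (butlast ns))
               (grid_V (cube (d - 1))) (grid_E (cube (d - 1))) ft S"
    and hg: "magic_edge_labeling (grid_V (butlast ns)) (grid_E (butlast ns))
               (grid_V (cube (d - 1))) (grid_E (cube (d - 1))) gt S'"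
    and hdef: "\<forall>x\<in>grid_V ns. \<forall>i\<in>{1..d}. add_unit x i \<in> grid_V ns \<longrightarrow>
       (let y = add_unit x i; x' = take (d - 1) x; y' = take (d - 1) y;
            nd = ns ! (d - 1); xd = x ! (d - 1) in
        g {x, y} =
          (if i = d then
             (if odd (sum_list (take (d - 1) x)) then ft x' + nd * M + (xd - 1) * N
              else ft x' + nd * M + (nd - 1 - xd) * N)
           else if (odd d \<and> i \<le> d - 1) \<or> (even d \<and> i \<le> d - 2) then
             (if odd i then gt {x', y'} + (xd - 1) * M
              else gt {x', y'} + (nd - xd) * M)
           else
             (if odd (sum_list (take (d - 2) x)) then gt {x', y'} + (xd - 1) * M
              else gt {x', y'} + (nd - xd) * M)))"
  shows "magic_edge_labeling (grid_V ns) (grid_E ns) (grid_V (cube d)) (grid_E (cube d)) g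
     (S + 2 * S' + 2 ^ (d - 2) * (ns ! (d - 1) - 2) * N
        + 2 ^ (d - 2) * (2 * ns ! (d - 1) + (d - 1) * (ns ! (d - 1) - 1)) * M)"
proof -
  obtain ns' n where ns: "ns = ns' @ [n]" using hd d3 by (cases ns rule: rev_cases) auto
  have d: "d = Suc (length ns')" using hd ns by simp
  have nd: "ns ! (d - 1) = n" using ns d by (simp add: nth_append)
  have "layered_labeling ns' n N M S S' ft gt g"
  proof
    show "2 \<le> length ns'" "2 \<le> n" using d3 d h2 nd by auto
    show "N = card (grid_V ns')" "M = card (grid_E ns')"
      "magic_vertex_labeling (grid_V ns') (grid_E ns')
        (grid_V (cube (length ns'))) (grid_E (cube (length ns'))) ft S"
      "magic_edge_labeling (grid_V ns') (grid_E ns')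
        (grid_V (cube (length ns'))) (grid_E (cube (length ns'))) gt S'"
      using hN hM hf hg ns d by simp_all
  next
    fix x t assume x: "x \<in> grid_V ns'" and t: "1 \<le> t" "t < n"
    have up: "add_unit (x @ [t]) d = x @ [t + 1]" using x d add_unit_snoc_last[of x t]
      by (simp add: grid_V_def)
    have "x @ [t] \<in> grid_V ns" "add_unit (x @ [t]) d \<in> grid_V ns" using x t ns up
      by (simp_all add: grid_V_snoc)
    then show "g (edge_at (x @ [t], length ns'))
        = n * M + ft x + (if odd (sum_list x) then t - 1 else n - 1 - t) * N"
      using hdef[rule_format, of "x @ [t]" d] x d nd up
      by (simp add: edge_at_def Let_def grid_V_def nth_append list_update_append)
  next
    fix x k t assume xk: "(x, k) \<in> edge_index ns'" and t: "1 \<le> t" "t \<le> n"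
    have x: "x \<in> grid_V ns'" and k: "k < length ns'" and lx: "length x = length ns'"
      using xk by (auto simp: edge_index_def grid_V_def)
    have "x @ [t] \<in> grid_V ns" "add_unit (x @ [t]) (Suc k) \<in> grid_V ns"
      using x t lx ns k step_in_grid_V[OF xk] by (simp_all add: grid_V_snoc add_unit_snoc)
    moreover have "take (d - 2) (x @ [t]) = butlast x" using lx d by (simp add: butlast_conv_take)
    moreover have "(odd d \<and> Suc k \<le> d - 1) \<or> (even d \<and> Suc k \<le> d - 2) \<longleftrightarrow>
        \<not> (odd (length ns') \<and> Suc k = length ns')"
      using k d by auto
    ultimately show "g (edge_at (x @ [t], k))
        = gt (edge_at (x, k)) + (if layers_ascend x k then t - 1 else n - t) * M"
      using hdef[rule_format, of "x @ [t]" "Suc k"] lx k d nd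
      by (simp add: edge_at_def add_unit_snoc layers_ascend_def Let_def nth_append list_update_append
          take_append)
  qed
  then interpret layered_labeling ns' n N M S S' ft gt g .
  show ?thesis using magic_edge_labeling_g ns d nd by simp
qed

end
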